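(* The equation $x\cdot y^{-1}+u\cdot v^{-1}=(x\cdot v+u\cdot y)\cdot(y\cdot v)^{-1}$ is derivable in equational logic from $\mathsf{Md}_\bot$.
   Context: The signature has one sort, constants $0,1,\bot$, binary operations $+,\cdot$ and unary operations $-$ and $(\,\cdot\,)^{-1}$; $^{-1}$ binds stronger than $\cdot$, which binds stronger than $+$. $\mathsf{Md}_\bot$ is the set of equations (variables universally quantified): $(x+y)+z=x+(y+z)$; $x+y=y+x$; $x+0=x$; $x+(-x)=0\cdot x$; $(x\cdot y)\cdot z=x\cdot(y\cdot z)$; $x\cdot y=y\cdot x$; $1\cdot x=x$; $x\cdot(y+z)=x\cdot y+x\cdot z$; $-(-x)=x$; $0\cdot(x\cdot x)=0\cdot x$; $(x^{-1})^{-1}=x+0\cdot x^{-1}$; $x\cdot x^{-1}=1+0\cdot x^{-1}$; $(x\cdot y)^{-1}=x^{-1}\cdot y^{-1}$; $1^{-1}=1$; $0^{-1}=\bot$; $x+\bot=\bot$; $x\cdot\bot=\bot$. *)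

theory Defs
  imports Main
begin

datatype trm =
    Var nat
  | Zero
  | One
  | Bot
  | Plus trm trm
  | Times trm trm
  | Neg trm
  | Inv trm

primrec subst :: "(nat \<Rightarrow> trm) \<Rightarrow> trm \<Rightarrow> trm" where
  "subst \<sigma> (Var n) = \<sigma> n"
| "subst \<sigma> Zero = Zero"
| "subst \<sigma> One = One"
| "subst \<sigma> Bot = Bot"
| "subst \<sigma> (Plus a b) = Plus (subst \<sigma> a) (subst \<sigma> b)"
| "subst \<sigma> (Times a b) = Times (subst \<sigma> a) (subst \<sigma> b)"
| "subst \<sigma> (Neg a) = Neg (subst \<sigma> a)"
| "subst \<sigma> (Inv a) = Inv (subst \<sigma> a)"

inductive derivable :: "(trm \<times> trm) set \<Rightarrow> trm \<Rightarrow> trm \<Rightarrow> bool" for E where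
  ax: "(s, t) \<in> E \<Longrightarrow> derivable E (subst \<sigma> s) (subst \<sigma> t)"
| refl: "derivable E t t"
| sym: "derivable E s t \<Longrightarrow> derivable E t s"
| trans: "derivable E s t \<Longrightarrow> derivable E t u \<Longrightarrow> derivable E s u"
| cong_plus: "derivable E s1 t1 \<Longrightarrow> derivable E s2 t2 \<Longrightarrow> derivable E (Plus s1 s2) (Plus t1 t2)"
| cong_times: "derivable E s1 t1 \<Longrightarrow> derivable E s2 t2 \<Longrightarrow> derivable E (Times s1 s2) (Times t1 t2)"
| cong_neg: "derivable E s t \<Longrightarrow> derivable E (Neg s) (Neg t)"
| cong_inv: "derivable E s t \<Longrightarrow> derivable E (Inv s) (Inv t)"

definition x :: trm where "x = Var 0"
definition y :: trm where "y = Var 1"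
definition z :: trm where "z = Var 2"

definition Md_bot :: "(trm \<times> trm) set" where
  "Md_bot = {
     (Plus (Plus x y) z, Plus x (Plus y z)),
     (Plus x y, Plus y x),
     (Plus x Zero, x),
     (Plus x (Neg x), Times Zero x),
     (Times (Times x y) z, Times x (Times y z)),
     (Times x y, Times y x),
     (Times One x, x),
     (Times x (Plus y z), Plus (Times x y) (Times x z)),
     (Neg (Neg x), x),
     (Times Zero (Times x x), Times Zero x),
     (Inv (Inv x), Plus x (Times Zero (Inv x))),
     (Times x (Inv x), Plus One (Times Zero (Inv x))),
     (Inv (Times x y), Times (Inv x) (Inv y)),
     (Inv One, One),
     (Inv Zero, Bot),
     (Plus x Bot, Bot),
     (Times x Bot, Bot)}"

end

theory Submission
  imports Defs
begin

text \<open>Terms modulo derivability from Md_bot form a commutative semiring without the law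
  0 * a = 0, equipped with - and inverse. In any such structure the "defect" 0 * a
  is additively idempotent, is absorbed by a, and is additive over products:
  0 * (a * b) = 0 * a + 0 * b. Multiplying out (x v + u y) (y v)\<inverse> with v v\<inverse> = 1 + 0 * v\<inverse>
  leaves x y\<inverse> + u v\<inverse> plus a sum of defects, and each of these defects is already
  contained in the defect of x y\<inverse> or of u v\<inverse>, so they are all absorbed.\<close>

locale Md_algebra =
  fixes neg :: "'a::{comm_monoid_add, comm_monoid_mult, comm_semiring} \<Rightarrow> 'a"
    and inv :: "'a \<Rightarrow> 'a"
  assumes add_neg: "a + neg a = 0 * a"
    and neg_neg: "neg (neg a) = a"
    and zero_mult_square: "0 * (a * a) = 0 * a"
    and mult_inv: "a * inv a = 1 + 0 * inv a"
    and inv_mult: "inv (a * b) = inv a * inv b"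
begin

lemma add_zero_mult_self: "a + 0 * a = (a::'a)"
proof -
  have "a * (1 + 0) = a * 1 + a * 0" by (rule distrib_left)
  then show ?thesis by (simp add: mult.commute)
qed

lemma zero_mult_zero: "0 * 0 = (0::'a)"
proof -
  have one_add_neg: "1 + neg 1 = 0" using add_neg[of 1] by simp
  have "0 * neg 1 = 0" using add_neg[of "neg 1"] one_add_neg by (simp add: neg_neg add.commute)
  then have "0 * (1 + neg 1) = (0::'a)" by (simp add: distrib_left)
  then show ?thesis by (simp only: one_add_neg)
qed

lemma zero_mult_add_self: "0 * a + 0 * a = 0 * (a::'a)"
proof -
  have "a * (0 + 0) = a * 0 + a * 0" by (rule distrib_left)
  then show ?thesis by (simp add: mult.commute)
qed

lemma zero_mult_add_self_left: "0 * a + (0 * a + c) = 0 * a + (c::'a)"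
  by (simp add: add.assoc[symmetric] zero_mult_add_self)

lemma zero_mult_mult_absorb: "0 * (a * b) = 0 * a + 0 * (a * (b::'a))"
proof -
  have "0 * (1 + 0 * b) = 0 * b"
    by (simp add: distrib_left mult.assoc[symmetric] zero_mult_zero)
  then have "0 * (a * b) = a * (0 * (1 + 0 * b))" by (simp add: mult_ac)
  also have "\<dots> = (a * 0) * (1 + 0 * b)" by (rule mult.assoc[symmetric])
  also have "\<dots> = (a * 0) * 1 + (a * 0) * (0 * b)" by (rule distrib_left)
  also have "\<dots> = 0 * a + (0 * 0) * (a * b)" by (simp only: mult_1_right mult_1_left mult_ac)
  finally show ?thesis by (simp only: zero_mult_zero)
qed

lemma zero_mult_add_split: "0 * a + 0 * b = 0 * a + 0 * (a * b) + 0 * (b::'a)"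
proof -
  have "0 * a + 0 * b = 0 * ((a + b) * (a + b))"
    by (simp only: zero_mult_square distrib_left[symmetric])
  also have "\<dots> = 0 * (a * a) + (0 * (a * b) + 0 * (a * b)) + 0 * (b * b)"
    by (simp add: algebra_simps)
  finally show ?thesis by (simp add: zero_mult_square zero_mult_add_self)
qed

lemma zero_mult_mult: "0 * (a * b) = 0 * a + 0 * (b::'a)"
proof -
  have "0 * (a * b) = 0 * a + (0 * b + 0 * (a * b))"
    using zero_mult_mult_absorb[of a b] zero_mult_mult_absorb[of b a] by (metis mult.commute)
  also have "\<dots> = 0 * a + 0 * b" using zero_mult_add_split[of a b] by (metis add.assoc add.commute)
  finally show ?thesis .
qed

lemma add_fractions: "p * inv q + r * inv s = (p * s + r * q) * inv (q * (s::'a))"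
proof -
  have "(p * s + r * q) * inv (q * s) = p * inv q * (s * inv s) + r * inv s * (q * inv q)"
    by (simp add: inv_mult algebra_simps)
  also have "\<dots> = p * inv q + 0 * (p * inv q * inv s) + (r * inv s + 0 * (r * inv s * inv q))"
    by (simp add: mult_inv algebra_simps)
  also have "\<dots> = p * inv q + r * inv s + (0 * p + 0 * inv q) + (0 * r + 0 * inv s)
      + (0 * inv q + 0 * inv s)"
    by (simp add: zero_mult_mult add_ac)
  also have "\<dots> = p * inv q + r * inv s + (0 * p + 0 * inv q) + (0 * r + 0 * inv s)"
    by (simp add: add_ac zero_mult_add_self zero_mult_add_self_left)
  also have "\<dots> = p * inv q + 0 * (p * inv q) + (r * inv s + 0 * (r * inv s))"
    by (simp add: zero_mult_mult add_ac)
  finally show ?thesis by (simp only: add_zero_mult_self)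
qed

end

lemma Md_bot_instance:
  "(s, t) \<in> Md_bot \<Longrightarrow> derivable Md_bot (subst (nth [a, b, c]) s) (subst (nth [a, b, c]) t)"
  by (rule derivable.ax)

lemma equivp_derivable: "equivp (derivable E)"
  by (rule equivpI) (auto simp: reflp_def symp_def transp_def intro: derivable.intros)

quotient_type Md_term = trm / "derivable Md_bot"
  by (rule equivp_derivable)

instantiation Md_term :: "{comm_monoid_add, comm_monoid_mult, comm_semiring}"
begin
lift_definition zero_Md_term :: Md_term is Zero .
lift_definition one_Md_term :: Md_term is One .
lift_definition plus_Md_term :: "Md_term \<Rightarrow> Md_term \<Rightarrow> Md_term" is Plus
  by (rule derivable.cong_plus)
lift_definition times_Md_term :: "Md_term \<Rightarrow> Md_term \<Rightarrow> Md_term" is Times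
  by (rule derivable.cong_times)
instance
proof
  have add_commute: "p + q = q + p" for p q :: Md_term
    by transfer (use Md_bot_instance[of "Plus x y" "Plus y x"] in
      \<open>simp add: Md_bot_def x_def y_def z_def\<close>)
  have mult_commute: "p * q = q * p" for p q :: Md_term
    by transfer (use Md_bot_instance[of "Times x y" "Times y x"] in
      \<open>simp add: Md_bot_def x_def y_def z_def\<close>)
  have add_0_right: "p + 0 = p" for p :: Md_term
    by transfer (use Md_bot_instance[of "Plus x Zero" "x"] in
      \<open>simp add: Md_bot_def x_def y_def z_def\<close>)
  have distrib_left: "p * (q + r) = p * q + p * r" for p q r :: Md_term
    by transfer (use Md_bot_instance[of "Times x (Plus y z)" "Plus (Times x y) (Times x z)"] in
      \<open>simp add: Md_bot_def x_def y_def z_def\<close>)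
  fix a b c :: Md_term
  show "a + b = b + a" "a * b = b * a" by (fact add_commute mult_commute)+
  show "0 + a = a" using add_0_right add_commute by metis
  show "(a + b) * c = a * c + b * c" using distrib_left mult_commute by metis
  show "a + b + c = a + (b + c)"
    by transfer (use Md_bot_instance[of "Plus (Plus x y) z" "Plus x (Plus y z)"] in
      \<open>simp add: Md_bot_def x_def y_def z_def\<close>)
  show "a * b * c = a * (b * c)"
    by transfer (use Md_bot_instance[of "Times (Times x y) z" "Times x (Times y z)"] in
      \<open>simp add: Md_bot_def x_def y_def z_def\<close>)
  show "1 * a = a"
    by transfer (use Md_bot_instance[of "Times One x" "x"] in
      \<open>simp add: Md_bot_def x_def y_def z_def\<close>)
qed
end

lift_definition Md_neg :: "Md_term \<Rightarrow> Md_term" is Neg by (rule derivable.cong_neg)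
lift_definition Md_inv :: "Md_term \<Rightarrow> Md_term" is Inv by (rule derivable.cong_inv)

interpretation Md_term: Md_algebra Md_neg Md_inv
proof
  fix a b :: Md_term
  show "a + Md_neg a = 0 * a"
    by transfer (use Md_bot_instance[of "Plus x (Neg x)" "Times Zero x"] in
      \<open>simp add: Md_bot_def x_def y_def z_def\<close>)
  show "Md_neg (Md_neg a) = a"
    by transfer (use Md_bot_instance[of "Neg (Neg x)" "x"] in
      \<open>simp add: Md_bot_def x_def y_def z_def\<close>)
  show "0 * (a * a) = 0 * a"
    by transfer (use Md_bot_instance[of "Times Zero (Times x x)" "Times Zero x"] in
      \<open>simp add: Md_bot_def x_def y_def z_def\<close>)
  show "a * Md_inv a = 1 + 0 * Md_inv a"
    by transfer (use Md_bot_instance[of "Times x (Inv x)" "Plus One (Times Zero (Inv x))"] in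
      \<open>simp add: Md_bot_def x_def y_def z_def\<close>)
  show "Md_inv (a * b) = Md_inv a * Md_inv b"
    by transfer (use Md_bot_instance[of "Inv (Times x y)" "Times (Inv x) (Inv y)"] in
      \<open>simp add: Md_bot_def x_def y_def z_def\<close>)
qed

theorem proposition2p2:
  shows "derivable Md_bot
           (Plus (Times (Var 0) (Inv (Var 1))) (Times (Var 2) (Inv (Var 3))))
           (Times (Plus (Times (Var 0) (Var 3)) (Times (Var 2) (Var 1)))
                  (Inv (Times (Var 1) (Var 3))))"
  unfolding Md_term.abs_eq_iff[symmetric] plus_Md_term.abs_eq[symmetric]
    times_Md_term.abs_eq[symmetric] Md_inv.abs_eq[symmetric]
  by (rule Md_term.add_fractions)

end
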